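(* Let $\mathscr{A}$ be a finite alphabet. Every minimal subshift $\Xi\subseteq\mathscr{A}^{\mathbb{Z}}$ is periodically approximable.
   Context: $\mathscr{A}^{\mathbb{Z}}$ carries the product topology ($\mathscr{A}$ discrete) and the shift $(T\xi)(j)=\xi(j-1)$. A subshift is a non-empty closed subset $\Xi$ with $T(\Xi)\subseteq\Xi$; it is minimal if the orbit $\mathrm{Orb}(\xi)=\{T^n\xi:n\in\mathbb{Z}\}$ is dense in $\Xi$ for every $\xi\in\Xi$. The set $\mathcal{J}$ of subshifts carries the Hausdorff (Vietoris) topology, with basis sets $\{\Xi:\Xi\cap F=\emptyset,\ \Xi\cap O\neq\emptyset\ \forall O\in\mathcal{F}\}$, $F$ closed, $\mathcal{F}$ a finite family of open subsets. A subshift is periodic if it equals $\mathrm{Orb}(\eta)$ for some $\eta$ with $T^n\eta=\eta$ for some $n\geq1$. $\Xi$ is periodically approximable if some sequence of periodic subshifts converges to $\Xi$ in $\mathcal{J}$. *)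

theory Defs
  imports "HOL-Analysis.Analysis"
begin

definition config_top :: "(int \<Rightarrow> 'a) topology" where
  "config_top = product_topology (\<lambda>_::int. discrete_topology (UNIV::'a set)) UNIV"

definition shift :: "(int \<Rightarrow> 'a) \<Rightarrow> (int \<Rightarrow> 'a)" where
  "shift \<xi> = (\<lambda>j. \<xi> (j - 1))"

definition shift_pow :: "int \<Rightarrow> (int \<Rightarrow> 'a) \<Rightarrow> (int \<Rightarrow> 'a)" where
  "shift_pow n \<xi> = (\<lambda>j. \<xi> (j - n))"

definition Orb :: "(int \<Rightarrow> 'a) \<Rightarrow> (int \<Rightarrow> 'a) set" where
  "Orb \<xi> = {shift_pow n \<xi> | n. True}"

definition subshift :: "(int \<Rightarrow> 'a) set \<Rightarrow> bool" where
  "subshift \<Xi> \<longleftrightarrow> \<Xi> \<noteq> {} \<and> closedin config_top \<Xi> \<and> shift ` \<Xi> \<subseteq> \<Xi>"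

definition minimal_subshift :: "(int \<Rightarrow> 'a) set \<Rightarrow> bool" where
  "minimal_subshift \<Xi> \<longleftrightarrow> subshift \<Xi> \<and>
     (\<forall>\<xi>\<in>\<Xi>. Orb \<xi> \<subseteq> \<Xi> \<and> \<Xi> \<subseteq> config_top closure_of (Orb \<xi>))"

definition periodic_subshift :: "(int \<Rightarrow> 'a) set \<Rightarrow> bool" where
  "periodic_subshift \<Xi> \<longleftrightarrow> (\<exists>\<eta> n. n \<ge> 1 \<and> (shift ^^ n) \<eta> = \<eta> \<and> \<Xi> = Orb \<eta>)"

text \<open>The Hausdorff (Vietoris) topology on the set J of subshifts, generated by the
  basis sets {Xi in J. Xi disjoint from F, Xi meets every U in the finite family}.\<close>
definition subshift_top :: "(int \<Rightarrow> 'a) set topology" where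
  "subshift_top = topology_generated_by
     {B. \<exists>F Fam. closedin config_top F \<and> finite Fam \<and> (\<forall>U\<in>Fam. openin config_top U) \<and>
          B = {\<Xi>. subshift \<Xi> \<and> \<Xi> \<inter> F = {} \<and> (\<forall>U\<in>Fam. \<Xi> \<inter> U \<noteq> {})}}"

definition periodically_approximable :: "(int \<Rightarrow> 'a) set \<Rightarrow> bool" where
  "periodically_approximable \<Xi> \<longleftrightarrow>
     (\<exists>S :: nat \<Rightarrow> (int \<Rightarrow> 'a) set. (\<forall>k. periodic_subshift (S k)) \<and>
        limitin subshift_top S \<Xi> sequentially)"

end

theory Submission
  imports Defs
begin

text \<open>Compactness makes a minimal subshift \<open>\<Xi>\<close> over a finite alphabet uniformly
  recurrent: for each \<open>N\<close> there is an \<open>R\<close> such that every word of length \<open>2N + 1\<close> of \<open>\<Xi>\<close>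
  occurs within distance \<open>R\<close> of any position in any point of \<open>\<Xi>\<close>. So a point \<open>\<xi>\<close> of \<open>\<Xi>\<close>
  contains all these words in a bounded block, and the word at the left end of the block recurs
  a little further right. Repeating \<open>\<xi>\<close> periodically between the two occurrences yields a
  periodic orbit with exactly the same words of length \<open>2N + 1\<close> as \<open>\<Xi>\<close>. As \<open>N \<rightarrow> \<infinity>\<close> these
  orbits converge to \<open>\<Xi>\<close> in the Vietoris topology, because a closed set missing \<open>\<Xi>\<close> is
  compact and hence contains no configuration whose long central word occurs in \<open>\<Xi>\<close>.\<close>

definition agree :: "int \<Rightarrow> (int \<Rightarrow> 'a) \<Rightarrow> (int \<Rightarrow> 'a) \<Rightarrow> bool" where
  "agree N x y \<longleftrightarrow> (\<forall>i. \<bar>i\<bar> \<le> N \<longrightarrow> x i = y i)"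

text \<open>For shift-invariant sets \<open>X\<close> and \<open>Y\<close> this says that every word of length \<open>2N + 1\<close>
  occurring in \<open>Y\<close> also occurs in \<open>X\<close>.\<close>
definition windows_subset :: "int \<Rightarrow> (int \<Rightarrow> 'a) set \<Rightarrow> (int \<Rightarrow> 'a) set \<Rightarrow> bool" where
  "windows_subset N Y X \<longleftrightarrow> (\<forall>y\<in>Y. \<exists>x\<in>X. agree N x y)"

lemma agree_refl [simp]: "agree N x x"
  by (simp add: agree_def)

lemma agree_sym: "agree N x y \<Longrightarrow> agree N y x"
  by (simp add: agree_def)

lemma agree_trans: "agree N x y \<Longrightarrow> agree N y z \<Longrightarrow> agree N x z"
  by (simp add: agree_def)

lemma agree_mono: "agree M x y \<Longrightarrow> N \<le> M \<Longrightarrow> agree N x y"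
  by (simp add: agree_def)

lemma windows_subset_mono: "windows_subset M Y X \<Longrightarrow> N \<le> M \<Longrightarrow> windows_subset N Y X"
  unfolding windows_subset_def by (meson agree_mono)

lemma topspace_config_top [simp]: "topspace config_top = UNIV"
  by (simp add: config_top_def)

lemma compact_space_config_top: "compact_space (config_top :: (int \<Rightarrow> 'a::finite) topology)"
  by (simp add: config_top_def compact_space_product_topology compact_space_discrete_topology)

lemma Hausdorff_space_config_top: "Hausdorff_space config_top"
  by (simp add: config_top_def Hausdorff_space_product_topology)

lemma openin_agree_cylinder: "openin config_top {y. agree N x y}"
proof -
  define X where "X i = (if \<bar>i\<bar> \<le> N then {x i} else UNIV)" for i
  have "openin (product_topology (\<lambda>_::int. discrete_topology (UNIV::'a set)) UNIV) (\<Pi>\<^sub>E i\<in>UNIV. X i)"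
  proof (rule product_topology_basis)
    show "finite {i. X i \<noteq> topspace (discrete_topology UNIV)}"
      by (rule finite_subset[of _ "{-N..N}"]) (auto simp: X_def split: if_splits)
  qed auto
  moreover have "(\<Pi>\<^sub>E i\<in>UNIV. X i) = {y. agree N x y}"
    by (auto simp: PiE_iff X_def agree_def) (metis singletonD)
  ultimately show ?thesis
    by (simp add: config_top_def)
qed

lemma openin_config_top_cylinder:
  assumes "openin config_top U" "x \<in> U"
  shows "\<exists>N. {y. agree N x y} \<subseteq> U"
proof -
  obtain V where V: "finite {i. V i \<noteq> topspace (discrete_topology (UNIV::'a set))}"
      "x \<in> Pi\<^sub>E UNIV V" "Pi\<^sub>E UNIV V \<subseteq> U"
    using assms unfolding config_top_def openin_product_topology_alt by auto
  define N where "N = Max (insert 0 (abs ` {i. V i \<noteq> UNIV}))"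
  have "y \<in> Pi\<^sub>E UNIV V" if "agree N x y" for y
  proof -
    have "y i \<in> V i" for i
    proof (cases "V i = UNIV")
      case False
      then have "\<bar>i\<bar> \<le> N"
        using V(1) unfolding N_def by (intro Max_ge) auto
      then have "y i = x i"
        using that by (simp add: agree_def)
      then show ?thesis
        using V(2) by (simp add: PiE_iff)
    qed auto
    then show ?thesis
      by (simp add: PiE_iff)
  qed
  then show ?thesis
    using V(3) by blast
qed

text \<open>A Lebesgue-number argument.\<close>
lemma compactin_uniform_agree:
  assumes K: "compactin config_top K"
    and local: "\<forall>x\<in>K. \<exists>N. \<forall>y. agree N x y \<longrightarrow> P N y"
    and mono: "\<And>N M y. N \<le> M \<Longrightarrow> P N y \<Longrightarrow> P M y"
  shows "\<exists>N. \<forall>y\<in>K. P N y"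
proof -
  obtain Nx where Nx: "\<forall>x\<in>K. \<forall>y. agree (Nx x) x y \<longrightarrow> P (Nx x) y"
    using local by metis
  let ?C = "\<lambda>x. {y. agree (Nx x) x y}"
  have "(\<forall>U \<in> ?C ` K. openin config_top U) \<and> K \<subseteq> \<Union>(?C ` K)"
    using openin_agree_cylinder by auto
  then obtain \<F> where \<F>: "finite \<F>" "\<F> \<subseteq> ?C ` K" "K \<subseteq> \<Union>\<F>"
    using K unfolding compactin_def by meson
  then obtain K' where K': "K' \<subseteq> K" "finite K'" "\<F> = ?C ` K'"
    by (meson finite_subset_image)
  define N where "N = Max (insert 0 (Nx ` K'))"
  have "P N y" if "y \<in> K" for y
  proof -
    obtain x where x: "x \<in> K'" "agree (Nx x) x y"
      using \<F>(3) K'(3) \<open>y \<in> K\<close> by blast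
    then have "P (Nx x) y"
      using Nx K'(1) by blast
    moreover have "Nx x \<le> N"
      unfolding N_def using K'(2) x(1) by auto
    ultimately show ?thesis
      using mono by blast
  qed
  then show ?thesis by blast
qed

lemma shift_pow_add: "shift_pow a (shift_pow b x) = shift_pow (a + b) x"
  by (simp add: shift_pow_def algebra_simps)

lemma shift_pow_0 [simp]: "shift_pow 0 x = x"
  by (simp add: shift_pow_def)

lemma funpow_shift_eq_shift_pow: "(shift ^^ n) x = shift_pow (int n) x"
proof (induction n)
  case (Suc n)
  have "shift (shift_pow (int n) x) = shift_pow 1 (shift_pow (int n) x)"
    by (simp add: shift_def shift_pow_def)
  with Suc show ?case
    by (simp add: shift_pow_add add.commute)
qed simp

lemma Orb_shift_pow: "shift_pow n x \<in> Orb x"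
  unfolding Orb_def by blast

lemma shift_pow_mod_period:
  assumes "shift_pow p \<eta> = \<eta>"
  shows "shift_pow n \<eta> = shift_pow (n mod p) \<eta>"
proof -
  have multiple: "shift_pow (p * int k) \<eta> = \<eta>" for k
    by (induction k) (use assms in \<open>simp_all add: distrib_left shift_pow_add [symmetric]\<close>)
  have multiples: "shift_pow (p * m) \<eta> = \<eta>" for m
  proof (cases "0 \<le> m")
    case True
    then show ?thesis
      using multiple[of "nat m"] by simp
  next
    case False
    then have "shift_pow (p * m) \<eta> = shift_pow (p * m) (shift_pow (p * int (nat (- m))) \<eta>)"
      using multiple[of "nat (- m)"] False by simp
    also have "\<dots> = \<eta>"
      using False by (simp add: shift_pow_add)
    finally show ?thesis .
  qed
  have "shift_pow n \<eta> = shift_pow (n mod p + p * (n div p)) \<eta>"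
    by simp
  also have "\<dots> = shift_pow (n mod p) (shift_pow (p * (n div p)) \<eta>)"
    by (simp add: shift_pow_add)
  also have "\<dots> = shift_pow (n mod p) \<eta>"
    using multiples by simp
  finally show ?thesis .
qed

lemma periodic_subshift_imp_subshift:
  assumes "periodic_subshift S"
  shows "subshift S"
proof -
  obtain \<eta> and n :: nat where n: "n \<ge> 1" "(shift ^^ n) \<eta> = \<eta>" and S: "S = Orb \<eta>"
    using assms unfolding periodic_subshift_def by blast
  have period: "shift_pow (int n) \<eta> = \<eta>"
    using n(2) by (simp add: funpow_shift_eq_shift_pow)
  have "S \<subseteq> (\<lambda>m. shift_pow m \<eta>) ` {0..<int n}"
  proof
    fix y assume "y \<in> S"
    then obtain m where "y = shift_pow m \<eta>"
      unfolding S Orb_def by blast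
    then have "y = shift_pow (m mod int n) \<eta>"
      using shift_pow_mod_period[OF period] by simp
    moreover have "m mod int n \<in> {0..<int n}"
      using n(1) by simp
    ultimately show "y \<in> (\<lambda>m. shift_pow m \<eta>) ` {0..<int n}" by blast
  qed
  then have "finite S"
    by (rule finite_subset) simp
  then have "closedin config_top S"
    using closedin_Hausdorff_finite[OF Hausdorff_space_config_top] by simp
  moreover have "shift ` S \<subseteq> S"
  proof
    fix y assume "y \<in> shift ` S"
    then obtain m where "y = shift (shift_pow m \<eta>)"
      unfolding S Orb_def by blast
    then have "y = shift_pow (1 + m) \<eta>"
      by (simp add: shift_def shift_pow_def algebra_simps)
    then show "y \<in> S"
      unfolding S by (simp add: Orb_shift_pow)
  qed
  ultimately show ?thesis
    unfolding subshift_def S Orb_def by auto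
qed

subsection \<open>Uniform recurrence\<close>

lemma minimal_subshift_Orb_subset:
  assumes "minimal_subshift \<Xi>" "\<xi> \<in> \<Xi>"
  shows "Orb \<xi> \<subseteq> \<Xi>"
  using assms unfolding minimal_subshift_def by blast

lemma minimal_subshift_compactin:
  assumes "minimal_subshift (\<Xi> :: (int \<Rightarrow> 'a::finite) set)"
  shows "compactin config_top \<Xi>"
  using assms compact_space_config_top closedin_compact_space
  unfolding minimal_subshift_def subshift_def by blast

text \<open>Each point of \<open>\<Xi>\<close> has \<open>\<zeta>\<close> in the closure of its orbit, so it sees the central
  \<open>N\<close>-window of \<open>\<zeta>\<close> at some position; this position also works on a cylinder around it.\<close>
lemma minimal_subshift_recurrence_bound:
  assumes m: "minimal_subshift (\<Xi> :: (int \<Rightarrow> 'a::finite) set)" and "\<zeta> \<in> \<Xi>"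
  shows "\<exists>R. \<forall>\<eta>\<in>\<Xi>. \<exists>q. \<bar>q\<bar> \<le> R \<and> agree N (shift_pow q \<eta>) \<zeta>"
proof (rule compactin_uniform_agree[OF minimal_subshift_compactin[OF m]])
  show "\<forall>x\<in>\<Xi>. \<exists>R. \<forall>w. agree R x w \<longrightarrow> (\<exists>q. \<bar>q\<bar> \<le> R \<and> agree N (shift_pow q w) \<zeta>)"
  proof
    fix x assume "x \<in> \<Xi>"
    then have "\<zeta> \<in> config_top closure_of (Orb x)"
      using m \<open>\<zeta> \<in> \<Xi>\<close> unfolding minimal_subshift_def by blast
    then have "\<exists>y\<in>Orb x. agree N \<zeta> y"
      using openin_agree_cylinder[of N \<zeta>] unfolding in_closure_of
      by (metis agree_refl mem_Collect_eq)
    then obtain n where n: "agree N \<zeta> (shift_pow n x)"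
      unfolding Orb_def by auto
    have "agree N (shift_pow n w) \<zeta>" if w: "agree (\<bar>n\<bar> + \<bar>N\<bar>) x w" for w
      unfolding agree_def
    proof (intro allI impI)
      fix i :: int assume "\<bar>i\<bar> \<le> N"
      then have "\<bar>i - n\<bar> \<le> \<bar>n\<bar> + \<bar>N\<bar>"
        by arith
      then have "w (i - n) = x (i - n)"
        using w by (simp add: agree_def)
      then show "shift_pow n w i = \<zeta> i"
        using n \<open>\<bar>i\<bar> \<le> N\<close> by (simp add: agree_def shift_pow_def)
    qed
    then show "\<exists>R. \<forall>w. agree R x w \<longrightarrow> (\<exists>q. \<bar>q\<bar> \<le> R \<and> agree N (shift_pow q w) \<zeta>)"
      by (intro exI[of _ "\<bar>n\<bar> + \<bar>N\<bar>"] allI impI exI[of _ n] conjI) auto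
  qed
qed (blast intro: order_trans)

lemma minimal_subshift_uniformly_recurrent:
  assumes m: "minimal_subshift (\<Xi> :: (int \<Rightarrow> 'a::finite) set)"
  shows "\<exists>R. \<forall>\<zeta>\<in>\<Xi>. \<forall>\<eta>\<in>\<Xi>. \<exists>q. \<bar>q\<bar> \<le> R \<and> agree N (shift_pow q \<eta>) \<zeta>"
proof (rule compactin_uniform_agree[OF minimal_subshift_compactin[OF m]])
  show "\<forall>x\<in>\<Xi>. \<exists>R. \<forall>y. agree R x y \<longrightarrow> (\<forall>\<eta>\<in>\<Xi>. \<exists>q. \<bar>q\<bar> \<le> R \<and> agree N (shift_pow q \<eta>) y)"
  proof
    fix x assume "x \<in> \<Xi>"
    then obtain R where R: "\<forall>\<eta>\<in>\<Xi>. \<exists>q. \<bar>q\<bar> \<le> R \<and> agree N (shift_pow q \<eta>) x"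
      using minimal_subshift_recurrence_bound[OF m] by blast
    have "\<exists>q. \<bar>q\<bar> \<le> max R N \<and> agree N (shift_pow q \<eta>) y"
      if "agree (max R N) x y" "\<eta> \<in> \<Xi>" for y \<eta>
    proof -
      obtain q where "\<bar>q\<bar> \<le> R" "agree N (shift_pow q \<eta>) x"
        using R \<open>\<eta> \<in> \<Xi>\<close> by blast
      moreover have "agree N x y"
        using agree_mono[OF \<open>agree (max R N) x y\<close>] by simp
      ultimately show ?thesis
        by (intro exI[of _ q]) (auto intro: agree_trans)
    qed
    then show "\<exists>R. \<forall>y. agree R x y \<longrightarrow> (\<forall>\<eta>\<in>\<Xi>. \<exists>q. \<bar>q\<bar> \<le> R \<and> agree N (shift_pow q \<eta>) y)"
      by blast
  qed
qed (blast intro: order_trans)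

text \<open>The \<open>N\<close>-window of \<open>\<xi>\<close> centred at \<open>a + N\<close> recurs in the shifted copy
  \<open>\<eta> i = \<xi> (i + a + N + L + R)\<close> within distance \<open>R\<close> of the origin, hence at some
  \<open>p \<ge> L\<close> to the right of its original place.\<close>
lemma minimal_subshift_return_time:
  assumes m: "minimal_subshift (\<Xi> :: (int \<Rightarrow> 'a::finite) set)" and "\<xi> \<in> \<Xi>"
  shows "\<exists>p\<ge>L. \<forall>x. a \<le> x \<and> x \<le> a + 2 * N \<longrightarrow> \<xi> (x + p) = \<xi> x"
proof -
  obtain R where R: "\<forall>\<zeta>\<in>\<Xi>. \<forall>\<eta>\<in>\<Xi>. \<exists>q. \<bar>q\<bar> \<le> R \<and> agree N (shift_pow q \<eta>) \<zeta>"
    using minimal_subshift_uniformly_recurrent[OF m] by blast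
  have "shift_pow (- (a + N)) \<xi> \<in> \<Xi>" "shift_pow (- (a + N + L + R)) \<xi> \<in> \<Xi>"
    using minimal_subshift_Orb_subset[OF m \<open>\<xi> \<in> \<Xi>\<close>] by (auto simp: Orb_shift_pow)
  then obtain q where q: "\<bar>q\<bar> \<le> R"
    "agree N (shift_pow q (shift_pow (- (a + N + L + R)) \<xi>)) (shift_pow (- (a + N)) \<xi>)"
    using R by blast
  have "\<xi> (x + (L + R - q)) = \<xi> x" if "a \<le> x" "x \<le> a + 2 * N" for x
  proof -
    have "\<bar>x - a - N\<bar> \<le> N"
      using that by arith
    then have "shift_pow q (shift_pow (- (a + N + L + R)) \<xi>) (x - a - N) = shift_pow (- (a + N)) \<xi> (x - a - N)"
      using q(2) unfolding agree_def by blast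
    then show ?thesis
      by (simp add: shift_pow_def algebra_simps)
  qed
  then show ?thesis
    using q(1) by (intro exI[of _ "L + R - q"]) auto
qed

subsection \<open>Periodic approximants\<close>

definition periodic_extension :: "int \<Rightarrow> int \<Rightarrow> (int \<Rightarrow> 'a) \<Rightarrow> int \<Rightarrow> 'a" where
  "periodic_extension a p \<xi> j = \<xi> (a + (j - a) mod p)"

lemma shift_pow_periodic_extension: "shift_pow p (periodic_extension a p \<xi>) = periodic_extension a p \<xi>"
proof -
  have "(j - p - a) mod p = (j - a) mod p" for j
    using mod_add_self2[of "j - p - a" p] by simp
  then show ?thesis
    by (simp add: periodic_extension_def shift_pow_def fun_eq_iff)
qed

lemma periodic_extension_eq: "a \<le> j \<Longrightarrow> j < a + p \<Longrightarrow> periodic_extension a p \<xi> j = \<xi> j"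
  by (simp add: periodic_extension_def)

text \<open>Windows that wrap around the period are covered by the overlap of length \<open>2N + 1\<close>
  at the two ends of the block.\<close>
lemma periodic_extension_window:
  assumes "2 * N < p"
    and overlap: "\<forall>x. a \<le> x \<and> x \<le> a + 2 * N \<longrightarrow> \<xi> (x + p) = \<xi> x"
    and "0 \<le> t" "t \<le> 2 * N"
  shows "periodic_extension a p \<xi> (j + t) = \<xi> (a + (j - a) mod p + t)"
proof -
  define r where "r = (j - a) mod p"
  have "0 < p"
    using assms(1,3,4) by linarith
  then have r: "0 \<le> r" "r < p"
    by (simp_all add: r_def)
  have extension: "periodic_extension a p \<xi> (j + t) = \<xi> (a + (r + t) mod p)"
    unfolding periodic_extension_def r_def mod_add_left_eq by (simp add: algebra_simps)
  show ?thesis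
  proof (cases "r + t < p")
    case True
    then show ?thesis
      using extension r \<open>0 \<le> t\<close> by (simp add: r_def [symmetric] add.assoc)
  next
    case False
    have "(r + t) mod p = (r + t - p) mod p"
      using mod_add_self2[of "r + t - p" p] by simp
    also have "\<dots> = r + t - p"
      using False r assms(1,4) by (intro mod_pos_pos_trivial) linarith+
    finally have "periodic_extension a p \<xi> (j + t) = \<xi> (a + (r + t - p))"
      using extension by simp
    also have "\<dots> = \<xi> (a + (r + t - p) + p)"
    proof -
      have "a \<le> a + (r + t - p)" "a + (r + t - p) \<le> a + 2 * N"
        using False r assms(1,4) by linarith+
      then have "\<xi> (a + (r + t - p) + p) = \<xi> (a + (r + t - p))"
        using overlap by blast
      then show ?thesis
        by (rule sym)
    qed
    finally show ?thesis
      by (simp add: r_def add.assoc)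
  qed
qed

lemma windows_subset_Orb_periodic_extension:
  assumes "2 * N < p" "\<forall>x. a \<le> x \<and> x \<le> a + 2 * N \<longrightarrow> \<xi> (x + p) = \<xi> x"
  shows "windows_subset N (Orb (periodic_extension a p \<xi>)) (Orb \<xi>)"
  unfolding windows_subset_def
proof
  fix y assume "y \<in> Orb (periodic_extension a p \<xi>)"
  then obtain n where y: "y = shift_pow n (periodic_extension a p \<xi>)"
    unfolding Orb_def by blast
  define c where "c = a + (- n - N - a) mod p + N"
  have "agree N (shift_pow (- c) \<xi>) y"
    unfolding agree_def
  proof (intro allI impI)
    fix i :: int assume "\<bar>i\<bar> \<le> N"
    then have "0 \<le> i + N" "i + N \<le> 2 * N"
      by linarith+
    then have "periodic_extension a p \<xi> (- n - N + (i + N)) = \<xi> (a + (- n - N - a) mod p + (i + N))"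
      by (rule periodic_extension_window[OF assms])
    then show "shift_pow (- c) \<xi> i = y i"
      by (simp add: y c_def shift_pow_def algebra_simps)
  qed
  then show "\<exists>x\<in>Orb \<xi>. agree N x y"
    using Orb_shift_pow by blast
qed

text \<open>Periodically extend a block of \<open>\<xi>\<close> that starts and ends with the same word of length
  \<open>2N + 1\<close> and contains every \<open>N\<close>-window of \<open>\<Xi>\<close>: uniform recurrence provides both.\<close>
lemma minimal_subshift_periodic_approximation:
  assumes m: "minimal_subshift (\<Xi> :: (int \<Rightarrow> 'a::finite) set)"
  shows "\<exists>S. periodic_subshift S \<and> windows_subset N S \<Xi> \<and> windows_subset N \<Xi> S"
proof -
  obtain \<xi> where "\<xi> \<in> \<Xi>"
    using m unfolding minimal_subshift_def subshift_def by blast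
  obtain R0 where R0: "\<forall>\<zeta>\<in>\<Xi>. \<forall>\<eta>\<in>\<Xi>. \<exists>q. \<bar>q\<bar> \<le> R0 \<and> agree N (shift_pow q \<eta>) \<zeta>"
    using minimal_subshift_uniformly_recurrent[OF m] by blast
  define R where "R = max R0 0"
  define a where "a = - R - N"
  obtain p where p: "p \<ge> 2 * R + 2 * \<bar>N\<bar> + 1"
    and overlap: "\<forall>x. a \<le> x \<and> x \<le> a + 2 * N \<longrightarrow> \<xi> (x + p) = \<xi> x"
    using minimal_subshift_return_time[OF m \<open>\<xi> \<in> \<Xi>\<close>] by blast
  have "2 * N < p" "0 \<le> R"
    using p by (auto simp: R_def)
  define e where "e = periodic_extension a p \<xi>"
  have "periodic_subshift (Orb e)"
    unfolding periodic_subshift_def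
  proof (intro exI conjI)
    show "(shift ^^ nat p) e = e"
      using \<open>2 * N < p\<close> p \<open>0 \<le> R\<close>
      by (simp add: funpow_shift_eq_shift_pow e_def shift_pow_periodic_extension)
  qed (use p \<open>0 \<le> R\<close> in auto)
  moreover have "windows_subset N (Orb e) \<Xi>"
    using windows_subset_Orb_periodic_extension[OF \<open>2 * N < p\<close> overlap]
      minimal_subshift_Orb_subset[OF m \<open>\<xi> \<in> \<Xi>\<close>]
    unfolding windows_subset_def e_def by blast
  moreover have "windows_subset N \<Xi> (Orb e)"
    unfolding windows_subset_def
  proof
    fix x assume "x \<in> \<Xi>"
    then obtain q where q: "\<bar>q\<bar> \<le> R" "agree N (shift_pow q \<xi>) x"
      using R0 \<open>\<xi> \<in> \<Xi>\<close> unfolding R_def by fastforce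
    have "agree N (shift_pow q e) x"
      unfolding agree_def
    proof (intro allI impI)
      fix i :: int assume "\<bar>i\<bar> \<le> N"
      then have "e (i - q) = \<xi> (i - q)"
        unfolding e_def using q(1) p by (intro periodic_extension_eq) (auto simp: a_def)
      then show "shift_pow q e i = x i"
        using q(2) \<open>\<bar>i\<bar> \<le> N\<close> by (simp add: agree_def shift_pow_def)
    qed
    then show "\<exists>y\<in>Orb e. agree N y x"
      using Orb_shift_pow by blast
  qed
  ultimately show ?thesis
    by blast
qed

subsection \<open>Convergence in the Vietoris topology\<close>

lemma limitin_topology_generated_byI:
  assumes "l \<in> \<Union>\<S>"
    and basis: "\<And>B. B \<in> \<S> \<Longrightarrow> l \<in> B \<Longrightarrow> eventually (\<lambda>k. f k \<in> B) F"
  shows "limitin (topology_generated_by \<S>) f l F"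
proof -
  have "eventually (\<lambda>k. f k \<in> U) F" if "generate_topology_on \<S> U" "l \<in> U" for U
    using that
  proof (induction rule: generate_topology_on.induct)
    case (Int U V)
    then show ?case
      by (simp add: eventually_conj)
  next
    case (UN K)
    then obtain U where "U \<in> K" "l \<in> U"
      by blast
    with UN.IH show ?case
      by (blast intro: eventually_mono)
  qed (simp_all add: basis)
  with assms(1) show ?thesis
    by (simp add: limitin_def openin_topology_generated_by_iff)
qed

text \<open>A closed set missing \<open>\<Xi>\<close> is compact, so it stays at a uniform distance from \<open>\<Xi>\<close>;
  configurations whose windows come from \<open>\<Xi>\<close> therefore avoid it.\<close>
lemma windows_subset_eventually_disjoint:
  fixes \<Xi> :: "(int \<Rightarrow> 'a::finite) set"
  assumes "closedin config_top \<Xi>" "closedin config_top F" "\<Xi> \<inter> F = {}"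
    and windows: "\<And>k. windows_subset (int k) (S k) \<Xi>"
  shows "eventually (\<lambda>k. S k \<inter> F = {}) sequentially"
proof -
  have "\<exists>N. \<forall>y\<in>F. \<not> (\<exists>z\<in>\<Xi>. agree N z y)"
  proof (rule compactin_uniform_agree)
    show "compactin config_top F"
      using assms(2) compact_space_config_top closedin_compact_space by blast
    show "\<forall>x\<in>F. \<exists>N. \<forall>y. agree N x y \<longrightarrow> \<not> (\<exists>z\<in>\<Xi>. agree N z y)"
    proof
      fix x assume "x \<in> F"
      have "openin config_top (UNIV - \<Xi>)"
        using assms(1) by (simp add: closedin_def)
      then obtain N where "{y. agree N x y} \<subseteq> UNIV - \<Xi>"
        using openin_config_top_cylinder \<open>x \<in> F\<close> assms(3) by blast
      have "\<not> (\<exists>z\<in>\<Xi>. agree N z y)" if "agree N x y" for y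
      proof
        assume "\<exists>z\<in>\<Xi>. agree N z y"
        then obtain z where "z \<in> \<Xi>" "agree N z y"
          by blast
        then have "agree N x z"
          using agree_trans[OF that agree_sym] by blast
        then show False
          using \<open>{y. agree N x y} \<subseteq> UNIV - \<Xi>\<close> \<open>z \<in> \<Xi>\<close> by blast
      qed
      then show "\<exists>N. \<forall>y. agree N x y \<longrightarrow> \<not> (\<exists>z\<in>\<Xi>. agree N z y)"
        by blast
    qed
  qed (use agree_mono in blast)
  then obtain N where N: "\<forall>y\<in>F. \<not> (\<exists>z\<in>\<Xi>. agree N z y)"
    by blast
  have "S k \<inter> F = {}" if "nat N \<le> k" for k
  proof -
    have "N \<le> int k"
      using that by linarith
    then have "windows_subset N (S k) \<Xi>"
      by (rule windows_subset_mono[OF windows])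
    then show ?thesis
      using N unfolding windows_subset_def by blast
  qed
  then show ?thesis
    by (rule eventually_sequentiallyI)
qed

lemma windows_subset_eventually_meets:
  assumes "openin config_top U" "\<Xi> \<inter> U \<noteq> {}"
    and windows: "\<And>k. windows_subset (int k) \<Xi> (S k)"
  shows "eventually (\<lambda>k. S k \<inter> U \<noteq> {}) sequentially"
proof -
  obtain x where "x \<in> \<Xi>" "x \<in> U"
    using assms(2) by blast
  then obtain N where N: "{y. agree N x y} \<subseteq> U"
    using openin_config_top_cylinder assms(1) by blast
  have "S k \<inter> U \<noteq> {}" if "nat N \<le> k" for k
  proof -
    obtain y where "y \<in> S k" "agree (int k) y x"
      using windows[of k] \<open>x \<in> \<Xi>\<close> unfolding windows_subset_def by blast
    moreover have "N \<le> int k"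
      using \<open>nat N \<le> k\<close> by linarith
    ultimately have "agree N x y"
      by (blast intro: agree_sym agree_mono)
    then show ?thesis
      using N \<open>y \<in> S k\<close> by blast
  qed
  then show ?thesis
    by (rule eventually_sequentiallyI)
qed

lemma limitin_subshift_top:
  fixes \<Xi> :: "(int \<Rightarrow> 'a::finite) set"
  assumes "subshift \<Xi>" "\<And>k. subshift (S k)"
    and "\<And>k. windows_subset (int k) (S k) \<Xi>" "\<And>k. windows_subset (int k) \<Xi> (S k)"
  shows "limitin subshift_top S \<Xi> sequentially"
  unfolding subshift_top_def
proof (rule limitin_topology_generated_byI)
  show "\<Xi> \<in> \<Union> {B. \<exists>F Fam. closedin config_top F \<and> finite Fam \<and> (\<forall>U\<in>Fam. openin config_top U) \<and>
          B = {\<Xi>. subshift \<Xi> \<and> \<Xi> \<inter> F = {} \<and> (\<forall>U\<in>Fam. \<Xi> \<inter> U \<noteq> {})}}"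
    using assms(1) by (intro UnionI[of "Collect subshift"] CollectI exI[of _ "{}"]) auto
next
  fix B
  assume "B \<in> {B. \<exists>F Fam. closedin config_top F \<and> finite Fam \<and> (\<forall>U\<in>Fam. openin config_top U) \<and>
          B = {\<Xi>. subshift \<Xi> \<and> \<Xi> \<inter> F = {} \<and> (\<forall>U\<in>Fam. \<Xi> \<inter> U \<noteq> {})}}" "\<Xi> \<in> B"
  then obtain F Fam where F: "closedin config_top F" "\<Xi> \<inter> F = {}"
    and Fam: "finite Fam" "\<forall>U\<in>Fam. openin config_top U \<and> \<Xi> \<inter> U \<noteq> {}"
    and B: "B = {\<Xi>. subshift \<Xi> \<and> \<Xi> \<inter> F = {} \<and> (\<forall>U\<in>Fam. \<Xi> \<inter> U \<noteq> {})}"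
    by auto
  have "eventually (\<lambda>k. S k \<inter> F = {}) sequentially"
    using assms(1,3) F unfolding subshift_def by (blast intro: windows_subset_eventually_disjoint)
  moreover have "eventually (\<lambda>k. \<forall>U\<in>Fam. S k \<inter> U \<noteq> {}) sequentially"
    using Fam assms(4) by (intro eventually_ball_finite ballI windows_subset_eventually_meets) auto
  ultimately show "eventually (\<lambda>k. S k \<in> B) sequentially"
    unfolding B using assms(2) by (auto elim: eventually_mono [OF eventually_conj])
qed

theorem corollary1:
  fixes \<Xi> :: "(int \<Rightarrow> 'a::finite) set"
  assumes "minimal_subshift \<Xi>"
  shows "periodically_approximable \<Xi>"
proof -
  have "\<forall>k::nat. \<exists>S. periodic_subshift S \<and> windows_subset (int k) S \<Xi> \<and> windows_subset (int k) \<Xi> S"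
    using minimal_subshift_periodic_approximation[OF assms] by blast
  then obtain S where S: "\<And>k. periodic_subshift (S k)"
    "\<And>k. windows_subset (int k) (S k) \<Xi>" "\<And>k. windows_subset (int k) \<Xi> (S k)"
    by metis
  have "limitin subshift_top S \<Xi> sequentially"
  proof (rule limitin_subshift_top)
    show "subshift \<Xi>"
      using assms by (simp add: minimal_subshift_def)
    show "subshift (S k)" for k
      using S(1) by (rule periodic_subshift_imp_subshift)
  qed (use S in auto)
  then show ?thesis
    unfolding periodically_approximable_def using S(1) by blast
qed

end
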